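(* Let $\mathcal{H}=(H,(G_h)_{h\in H})$ be a point-finite, honest graph-decomposition of a graph $G$ into finite connected parts. Then the map $f\mapsto g_f$ from the directions of $G$ to the directions of $H$ is a bijection.
   Context: A graph-decomposition of $G$ is a pair $(H,(G_h)_{h\in H})$ of a graph $H$ and subgraphs $G_h\subseteq G$ such that $G=\bigcup_h G_h$ and, for every vertex $v$ of $G$, $H_v:=H[\{h:v\in G_h\}]$ is connected. It is point-finite if every $H_v$ is finite, and honest if $G_h\cap G_{h'}\ne\emptyset$ for every edge $hh'$ of $H$. A direction of a graph $X$ is a map $f$ assigning to every finite vertex set $Y$ of $X$ a component $f(Y)$ of $X-Y$ such that $f(Y)\supseteq f(Y')$ whenever $Y\subseteq Y'$. For a direction $f$ of $G$, $g_f$ is the direction of $H$ defined as follows: for a finite $Y\subseteq V(H)$ let $X_Y=\bigcup_{h\in Y}V(G_h)$ (finite since parts are finite); then $g_f(Y)$ is the component of $H-Y$ containing $\bigcup_{v\in f(X_Y)}H_v$. *)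

theory Defs
  imports Main
begin

definition graph :: "'v set \<Rightarrow> 'v set set \<Rightarrow> bool" where
  "graph V E \<longleftrightarrow> (\<forall>e\<in>E. e \<subseteq> V \<and> card e = 2)"

definition subgraph :: "'v set \<Rightarrow> 'v set set \<Rightarrow> 'v set \<Rightarrow> 'v set set \<Rightarrow> bool" where
  "subgraph V' E' V E \<longleftrightarrow> graph V' E' \<and> V' \<subseteq> V \<and> E' \<subseteq> E"

definition conn :: "'v set set \<Rightarrow> 'v set \<Rightarrow> bool" where
  "conn E S \<longleftrightarrow> S \<noteq> {} \<and>
     (\<forall>x\<in>S. \<forall>y\<in>S. (\<lambda>a b. a \<in> S \<and> b \<in> S \<and> {a, b} \<in> E)\<^sup>*\<^sup>* x y)"

definition component :: "'v set \<Rightarrow> 'v set set \<Rightarrow> 'v set \<Rightarrow> 'v set \<Rightarrow> bool" where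
  "component V E Y C \<longleftrightarrow> C \<subseteq> V - Y \<and> conn E C \<and>
     (\<forall>D. C \<subseteq> D \<and> D \<subseteq> V - Y \<and> conn E D \<longrightarrow> D = C)"

text \<open>Directions of (V,E); to make the set of directions well defined we require the
  value {} outside the domain (finite subsets of V).\<close>

definition direction :: "'v set \<Rightarrow> 'v set set \<Rightarrow> ('v set \<Rightarrow> 'v set) \<Rightarrow> bool" where
  "direction V E f \<longleftrightarrow>
     (\<forall>Y. finite Y \<and> Y \<subseteq> V \<longrightarrow> component V E Y (f Y)) \<and>
     (\<forall>Y Y'. finite Y' \<and> Y' \<subseteq> V \<and> Y \<subseteq> Y' \<longrightarrow> f Y' \<subseteq> f Y) \<and>
     (\<forall>Y. \<not> (finite Y \<and> Y \<subseteq> V) \<longrightarrow> f Y = {})"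

definition directions :: "'v set \<Rightarrow> 'v set set \<Rightarrow> ('v set \<Rightarrow> 'v set) set" where
  "directions V E = {f. direction V E f}"

text \<open>A graph-decomposition (H,(G_h)) of G: H = (VH,EH), G_h = (GV h, GE h).\<close>

definition graph_decomposition ::
  "'v set \<Rightarrow> 'v set set \<Rightarrow> 'h set \<Rightarrow> 'h set set \<Rightarrow> ('h \<Rightarrow> 'v set) \<Rightarrow> ('h \<Rightarrow> 'v set set) \<Rightarrow> bool" where
  "graph_decomposition VG EG VH EH GV GE \<longleftrightarrow>
     graph VG EG \<and> graph VH EH \<and>
     (\<forall>h\<in>VH. subgraph (GV h) (GE h) VG EG) \<and>
     VG = (\<Union>h\<in>VH. GV h) \<and> EG = (\<Union>h\<in>VH. GE h) \<and>
     (\<forall>v\<in>VG. conn EH {h\<in>VH. v \<in> GV h})"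

definition point_finite :: "'v set \<Rightarrow> 'h set \<Rightarrow> ('h \<Rightarrow> 'v set) \<Rightarrow> bool" where
  "point_finite VG VH GV \<longleftrightarrow> (\<forall>v\<in>VG. finite {h\<in>VH. v \<in> GV h})"

definition honest :: "'h set set \<Rightarrow> ('h \<Rightarrow> 'v set) \<Rightarrow> bool" where
  "honest EH GV \<longleftrightarrow> (\<forall>h h'. {h, h'} \<in> EH \<longrightarrow> GV h \<inter> GV h' \<noteq> {})"

definition induced_dir ::
  "'h set \<Rightarrow> 'h set set \<Rightarrow> ('h \<Rightarrow> 'v set) \<Rightarrow> ('v set \<Rightarrow> 'v set) \<Rightarrow> 'h set \<Rightarrow> 'h set" where
  "induced_dir VH EH GV f Y =
     (if finite Y \<and> Y \<subseteq> VH then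
        (THE C. component VH EH Y C \<and>
           (\<Union>v\<in>f (\<Union>h\<in>Y. GV h). {h\<in>VH. v \<in> GV h}) \<subseteq> C)
      else {})"

end

theory Submission
  imports Defs
begin

(* The incidence relation "v lies in G_h" links G and H symmetrically: every vertex of either
   graph is related to a finite, nonempty, connected vertex set of the other graph, and adjacent
   vertices have overlapping related sets (in G because the edge lies in some part, in H by
   honesty).  Hence the image of a connected set avoiding the preimage of a finite set Y is
   connected and avoids Y, so directions can be transferred along the relation in either
   direction; f \<mapsto> g_f is the transfer from G to H.  The transfer back is inverse to it,
   because a transferred component meets the original one, and two components of the same
   graph minus the same finite set that meet are equal. *)

lemma conn_nonempty: "conn E S \<Longrightarrow> S \<noteq> {}"
  by (simp add: conn_def)

lemma walk_mono:
  assumes "(\<lambda>a b. a \<in> A \<and> b \<in> A \<and> {a, b} \<in> E)\<^sup>*\<^sup>* x y" "A \<subseteq> B" "E \<subseteq> E'"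
  shows "(\<lambda>a b. a \<in> B \<and> b \<in> B \<and> {a, b} \<in> E')\<^sup>*\<^sup>* x y"
  using assms(1) by (rule mono_rtranclp[rule_format, rotated]) (use assms(2,3) in blast)

lemma conn_walk:
  "conn E A \<Longrightarrow> A \<subseteq> B \<Longrightarrow> x \<in> A \<Longrightarrow> y \<in> A \<Longrightarrow> (\<lambda>a b. a \<in> B \<and> b \<in> B \<and> {a, b} \<in> E)\<^sup>*\<^sup>* x y"
  unfolding conn_def by (blast intro: walk_mono)

lemma conn_mono_edges: "conn E S \<Longrightarrow> E \<subseteq> E' \<Longrightarrow> conn E' S"
  unfolding conn_def by (blast intro: walk_mono)

lemma conn_UN:
  assumes S: "conn ES S" and F: "\<And>a. a \<in> S \<Longrightarrow> conn E (F a)"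
    and overlap: "\<And>a b. a \<in> S \<Longrightarrow> b \<in> S \<Longrightarrow> {a, b} \<in> ES \<Longrightarrow> F a \<inter> F b \<noteq> {}"
  shows "conn E (\<Union>a\<in>S. F a)"
proof -
  let ?U = "\<Union>a\<in>S. F a"
  let ?walk = "(\<lambda>x y. x \<in> ?U \<and> y \<in> ?U \<and> {x, y} \<in> E)\<^sup>*\<^sup>*"
  have inside: "?walk x y" if "a \<in> S" "x \<in> F a" "y \<in> F a" for a x y
    using conn_walk[OF F] that by blast
  have along: "\<forall>x\<in>F a. \<forall>y\<in>F b. ?walk x y"
    if "(\<lambda>a b. a \<in> S \<and> b \<in> S \<and> {a, b} \<in> ES)\<^sup>*\<^sup>* a b" "a \<in> S" for a b
    using that
  proof (induction rule: rtranclp_induct)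
    case base
    then show ?case using inside by blast
  next
    case (step b c)
    then have bc: "b \<in> S" "c \<in> S" "{b, c} \<in> ES" by auto
    obtain z where "z \<in> F b" "z \<in> F c" using overlap[OF bc] by auto
    then show ?case using step inside[OF bc(2)] by (meson rtranclp_trans)
  qed
  show ?thesis unfolding conn_def
  proof (intro conjI ballI)
    show "?U \<noteq> {}" using S F by (auto dest!: conn_nonempty)
  next
    fix x y assume "x \<in> ?U" "y \<in> ?U"
    then obtain a b where "a \<in> S" "b \<in> S" "x \<in> F a" "y \<in> F b" by auto
    then show "?walk x y" using along S unfolding conn_def by blast
  qed
qed

lemma conn_Union_common_point:
  assumes "\<And>A. A \<in> \<A> \<Longrightarrow> conn E A \<and> d \<in> A" and "\<A> \<noteq> {}"
  shows "conn E (\<Union>\<A>)"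
  unfolding conn_def
proof (intro conjI ballI)
  show "\<Union>\<A> \<noteq> {}" using assms by blast
next
  fix x y assume "x \<in> \<Union>\<A>" "y \<in> \<Union>\<A>"
  then obtain A B where "A \<in> \<A>" "B \<in> \<A>" "x \<in> A" "y \<in> B" by auto
  then have "(\<lambda>a b. a \<in> \<Union>\<A> \<and> b \<in> \<Union>\<A> \<and> {a, b} \<in> E)\<^sup>*\<^sup>* x d"
    "(\<lambda>a b. a \<in> \<Union>\<A> \<and> b \<in> \<Union>\<A> \<and> {a, b} \<in> E)\<^sup>*\<^sup>* d y"
    using assms(1) by (blast intro: conn_walk)+
  then show "(\<lambda>a b. a \<in> \<Union>\<A> \<and> b \<in> \<Union>\<A> \<and> {a, b} \<in> E)\<^sup>*\<^sup>* x y"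
    by (rule rtranclp_trans)
qed

lemma conn_Un:
  assumes "conn E A" "conn E B" "A \<inter> B \<noteq> {}" shows "conn E (A \<union> B)"
proof -
  obtain d where "d \<in> A" "d \<in> B" using assms(3) by blast
  then show ?thesis using conn_Union_common_point[of "{A, B}" E d] assms by auto
qed

lemma component_conn_subset:
  "component V E Y C \<Longrightarrow> conn E C \<and> C \<subseteq> V - Y"
  by (simp add: component_def)

lemma conn_subset_component:
  assumes C: "component V E Y C" and D: "conn E D" "D \<subseteq> V - Y" "D \<inter> C \<noteq> {}"
  shows "D \<subseteq> C"
proof -
  have C': "conn E C" "C \<subseteq> V - Y" using component_conn_subset[OF C] by auto
  have "conn E (C \<union> D)" using conn_Un[OF C'(1) D(1)] D(3) by (simp add: Int_commute)
  then have "C \<union> D = C" using C D(2) C'(2) unfolding component_def by blast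
  then show ?thesis by blast
qed

lemma component_eq:
  assumes "component V E Y C" "component V E Y C'" "C \<inter> C' \<noteq> {}" shows "C = C'"
proof
  show "C \<subseteq> C'"
    using conn_subset_component[OF assms(2)] component_conn_subset[OF assms(1)] assms(3) by blast
  show "C' \<subseteq> C"
    using conn_subset_component[OF assms(1)] component_conn_subset[OF assms(2)] assms(3) by blast
qed

lemma component_exists:
  assumes D: "conn E D" "D \<subseteq> V - Y"
  shows "\<exists>C. component V E Y C \<and> D \<subseteq> C"
proof -
  define \<D> where "\<D> = {D'. D \<subseteq> D' \<and> D' \<subseteq> V - Y \<and> conn E D'}"
  obtain d where "d \<in> D" using conn_nonempty[OF D(1)] by blast
  then have conn: "conn E (\<Union>\<D>)"
    by (intro conn_Union_common_point[where d = d]) (use D in \<open>auto simp: \<D>_def\<close>)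
  have "D \<subseteq> \<Union>\<D>" using D by (auto simp: \<D>_def)
  moreover have "component V E Y (\<Union>\<D>)"
    unfolding component_def
  proof (intro conjI allI impI conn)
    show "\<Union>\<D> \<subseteq> V - Y" by (auto simp: \<D>_def)
    fix D' assume D': "\<Union>\<D> \<subseteq> D' \<and> D' \<subseteq> V - Y \<and> conn E D'"
    then have "D' \<in> \<D>" using \<open>D \<subseteq> \<Union>\<D>\<close> by (auto simp: \<D>_def)
    then show "D' = \<Union>\<D>" using D' by blast
  qed
  ultimately show ?thesis by blast
qed

definition component_of :: "'v set \<Rightarrow> 'v set set \<Rightarrow> 'v set \<Rightarrow> 'v set \<Rightarrow> 'v set" where
  "component_of V E Y D = (THE C. component V E Y C \<and> D \<subseteq> C)"

lemma component_of:
  assumes "conn E D" "D \<subseteq> V - Y"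
  shows "component V E Y (component_of V E Y D)" "D \<subseteq> component_of V E Y D"
proof -
  obtain C where C: "component V E Y C" "D \<subseteq> C"
    using component_exists[OF assms] by blast
  have "component_of V E Y D = C"
    unfolding component_of_def
  proof (rule the_equality)
    fix C' assume C': "component V E Y C' \<and> D \<subseteq> C'"
    then have "C' \<inter> C \<noteq> {}" using C(2) conn_nonempty[OF assms(1)] by blast
    then show "C' = C" using component_eq C' C(1) by blast
  qed (use C in blast)
  then show "component V E Y (component_of V E Y D)" "D \<subseteq> component_of V E Y D"
    using C by simp_all
qed

lemma direction_component:
  "direction V E f \<Longrightarrow> finite Y \<Longrightarrow> Y \<subseteq> V \<Longrightarrow> component V E Y (f Y)"
  by (simp add: direction_def)

lemma direction_antimono:
  "direction V E f \<Longrightarrow> finite Y' \<Longrightarrow> Y' \<subseteq> V \<Longrightarrow> Y \<subseteq> Y' \<Longrightarrow> f Y' \<subseteq> f Y"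
  by (simp add: direction_def)

lemma direction_nonempty:
  assumes "direction V E f" "finite Y" "Y \<subseteq> V" shows "f Y \<noteq> {}"
  using component_conn_subset[OF direction_component[OF assms]] conn_nonempty by blast

lemma direction_eqI:
  assumes f: "direction V E f" and f': "direction V E f'"
    and meet: "\<And>Y. finite Y \<Longrightarrow> Y \<subseteq> V \<Longrightarrow> f Y \<inter> f' Y \<noteq> {}"
  shows "f = f'"
proof
  fix Y
  show "f Y = f' Y"
  proof (cases "finite Y \<and> Y \<subseteq> V")
    case True
    then show ?thesis
      using component_eq[OF direction_component[OF f] direction_component[OF f'] meet] by blast
  next
    case False
    then show ?thesis using f f' by (simp add: direction_def)
  qed
qed

lemma direction_component_of:
  assumes D: "\<And>Y. finite Y \<Longrightarrow> Y \<subseteq> V \<Longrightarrow> conn E (D Y) \<and> D Y \<subseteq> V - Y"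
    and antimono: "\<And>Y Y'. finite Y' \<Longrightarrow> Y' \<subseteq> V \<Longrightarrow> Y \<subseteq> Y' \<Longrightarrow> D Y' \<subseteq> D Y"
  shows "direction V E (\<lambda>Y. if finite Y \<and> Y \<subseteq> V then component_of V E Y (D Y) else {})"
  unfolding direction_def
proof (intro conjI allI impI)
  fix Y assume Y: "finite Y \<and> Y \<subseteq> V"
  then have "conn E (D Y)" "D Y \<subseteq> V - Y" using D by auto
  then show "component V E Y (if finite Y \<and> Y \<subseteq> V then component_of V E Y (D Y) else {})"
    using Y component_of(1) by simp
next
  fix Y Y' assume Y': "finite Y' \<and> Y' \<subseteq> V \<and> Y \<subseteq> Y'"
  then have Y: "finite Y" "Y \<subseteq> V" using finite_subset by auto
  let ?C = "component_of V E Y (D Y)" and ?C' = "component_of V E Y' (D Y')"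
  have DY: "conn E (D Y)" "D Y \<subseteq> V - Y" using D[OF Y] by auto
  have DY': "conn E (D Y')" "D Y' \<subseteq> V - Y'" using D Y' by auto
  have "D Y' \<subseteq> ?C' \<inter> ?C"
    using component_of(2)[OF DY'] component_of(2)[OF DY] antimono Y' by blast
  then have "?C' \<inter> ?C \<noteq> {}" using conn_nonempty[OF DY'(1)] by blast
  moreover have "conn E ?C'" "?C' \<subseteq> V - Y"
    using component_conn_subset[OF component_of(1)[OF DY']] Y' by auto
  ultimately have "?C' \<subseteq> ?C" using conn_subset_component[OF component_of(1)[OF DY]] by blast
  then show "(if finite Y' \<and> Y' \<subseteq> V then ?C' else {}) \<subseteq> (if finite Y \<and> Y \<subseteq> V then ?C else {})"
    using Y Y' by simp
qed auto

definition dir_transfer ::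
  "'b set \<Rightarrow> 'b set set \<Rightarrow> ('a \<times> 'b) set \<Rightarrow> ('a set \<Rightarrow> 'a set) \<Rightarrow> 'b set \<Rightarrow> 'b set" where
  "dir_transfer V E R f Y =
     (if finite Y \<and> Y \<subseteq> V then component_of V E Y (R `` f (R\<inverse> `` Y)) else {})"

locale graph_correspondence =
  fixes VA :: "'a set" and EA :: "'a set set" and VB :: "'b set" and EB :: "'b set set"
    and R :: "('a \<times> 'b) set"
  assumes rel_subset: "R \<subseteq> VA \<times> VB"
    and finite_Image: "a \<in> VA \<Longrightarrow> finite (R `` {a})" "b \<in> VB \<Longrightarrow> finite (R\<inverse> `` {b})"
    and conn_Image: "a \<in> VA \<Longrightarrow> conn EB (R `` {a})" "b \<in> VB \<Longrightarrow> conn EA (R\<inverse> `` {b})"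
    and edge_Image: "{a, a'} \<in> EA \<Longrightarrow> R `` {a} \<inter> R `` {a'} \<noteq> {}"
      "{b, b'} \<in> EB \<Longrightarrow> R\<inverse> `` {b} \<inter> R\<inverse> `` {b'} \<noteq> {}"
begin

lemma converse: "graph_correspondence VB EB VA EA (R\<inverse>)"
proof
  show "R\<inverse> \<subseteq> VB \<times> VA" using rel_subset by auto
qed (simp_all add: finite_Image conn_Image edge_Image)

lemma finite_preimage:
  assumes "finite Y" "Y \<subseteq> VB" shows "finite (R\<inverse> `` Y)" "R\<inverse> `` Y \<subseteq> VA"
  using assms finite_Image(2) rel_subset by (auto simp: Image_eq_UN[of "R\<inverse>" Y])

lemma conn_Image_conn:
  assumes "conn EA S" "S \<subseteq> VA" shows "conn EB (R `` S)"
  unfolding Image_eq_UN[of R S]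
proof (rule conn_UN[OF assms(1)])
  show "conn EB (R `` {a})" if "a \<in> S" for a using that assms(2) conn_Image(1) by blast
qed (rule edge_Image(1))

lemma Image_direction:
  assumes f: "direction VA EA f" and Y: "finite Y" "Y \<subseteq> VB"
  shows "conn EB (R `` f (R\<inverse> `` Y)) \<and> R `` f (R\<inverse> `` Y) \<subseteq> VB - Y"
proof -
  have "conn EA (f (R\<inverse> `` Y))" "f (R\<inverse> `` Y) \<subseteq> VA - R\<inverse> `` Y"
    using component_conn_subset[OF direction_component[OF f finite_preimage[OF Y]]] by auto
  then show ?thesis
    using conn_Image_conn rel_subset by blast
qed

lemma direction_dir_transfer:
  assumes f: "direction VA EA f" shows "direction VB EB (dir_transfer VB EB R f)"
  unfolding dir_transfer_def[abs_def]
proof (rule direction_component_of)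
  show "conn EB (R `` f (R\<inverse> `` Y)) \<and> R `` f (R\<inverse> `` Y) \<subseteq> VB - Y"
    if "finite Y" "Y \<subseteq> VB" for Y
    using Image_direction[OF f that] .
  show "R `` f (R\<inverse> `` Y') \<subseteq> R `` f (R\<inverse> `` Y)"
    if "finite Y'" "Y' \<subseteq> VB" "Y \<subseteq> Y'" for Y Y'
    using direction_antimono[OF f finite_preimage[OF that(1,2)]] that(3) by blast
qed

lemma dir_transfer_converse:
  assumes f: "direction VA EA f"
  shows "dir_transfer VA EA (R\<inverse>) (dir_transfer VB EB R f) = f"
proof (rule direction_eqI)
  let ?g = "dir_transfer VB EB R f"
  have g: "direction VB EB ?g" by (rule direction_dir_transfer[OF f])
  then show "direction VA EA (dir_transfer VA EA (R\<inverse>) ?g)"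
    by (rule graph_correspondence.direction_dir_transfer[OF converse])
  fix X assume X: "finite X" "X \<subseteq> VA"
  define Y where "Y = R `` X"
  have Y: "finite Y" "Y \<subseteq> VB"
    using X finite_Image(1) rel_subset by (auto simp: Y_def Image_eq_UN[of R X])
  have "X \<subseteq> R\<inverse> `` Y"
    using X conn_Image(1) conn_nonempty unfolding Y_def by blast
  then obtain a where a: "a \<in> f (R\<inverse> `` Y)" "a \<in> f X"
    using direction_nonempty[OF f finite_preimage[OF Y]]
      direction_antimono[OF f finite_preimage[OF Y]] by blast
  then have "a \<in> VA"
    using component_conn_subset[OF direction_component[OF f X]] by blast
  then obtain b where "(a, b) \<in> R"
    using conn_nonempty[OF conn_Image(1)] by blast
  moreover have "R `` f (R\<inverse> `` Y) \<subseteq> ?g Y"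
    using Image_direction[OF f Y] Y by (simp add: dir_transfer_def component_of(2))
  moreover have "R\<inverse> `` ?g Y \<subseteq> dir_transfer VA EA (R\<inverse>) ?g X"
    using graph_correspondence.Image_direction[OF converse g X] X
    by (simp add: dir_transfer_def[of VA] component_of(2) Y_def[symmetric])
  ultimately show "dir_transfer VA EA (R\<inverse>) ?g X \<inter> f X \<noteq> {}"
    using a by blast
qed (rule f)

lemma bij_betw_dir_transfer:
  "bij_betw (dir_transfer VB EB R) (directions VA EA) (directions VB EB)"
proof (rule bij_betw_byWitness[where f' = "dir_transfer VA EA (R\<inverse>)"])
  interpret opposite: graph_correspondence VB EB VA EA "R\<inverse>" by (rule converse)
  show "\<forall>f\<in>directions VA EA. dir_transfer VA EA (R\<inverse>) (dir_transfer VB EB R f) = f"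
    by (simp add: directions_def dir_transfer_converse)
  show "\<forall>g\<in>directions VB EB. dir_transfer VB EB R (dir_transfer VA EA (R\<inverse>) g) = g"
    using opposite.dir_transfer_converse by (simp add: directions_def)
  show "dir_transfer VB EB R ` directions VA EA \<subseteq> directions VB EB"
    using direction_dir_transfer by (auto simp: directions_def)
  show "dir_transfer VA EA (R\<inverse>) ` directions VB EB \<subseteq> directions VA EA"
    using opposite.direction_dir_transfer by (auto simp: directions_def)
qed

end
definition incidence :: "'h set \<Rightarrow> ('h \<Rightarrow> 'v set) \<Rightarrow> ('v \<times> 'h) set" where
  "incidence VH GV = {(v, h). h \<in> VH \<and> v \<in> GV h}"

lemma induced_dir_eq_dir_transfer:
  "induced_dir VH EH GV = dir_transfer VH EH (incidence VH GV)"
proof (intro ext)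
  fix f Y
  have "Y \<subseteq> VH \<Longrightarrow> (incidence VH GV)\<inverse> `` Y = (\<Union>h\<in>Y. GV h)"
    "incidence VH GV `` S = (\<Union>v\<in>S. {h \<in> VH. v \<in> GV h})" for S
    by (auto simp: incidence_def)
  then show "induced_dir VH EH GV f Y = dir_transfer VH EH (incidence VH GV) f Y"
    by (simp add: induced_dir_def dir_transfer_def component_of_def)
qed

lemma graph_correspondence_incidence:
  assumes dec: "graph_decomposition VG EG VH EH GV GE"
    and "point_finite VG VH GV" "honest EH GV"
    and parts: "\<forall>h\<in>VH. finite (GV h) \<and> conn (GE h) (GV h)"
  shows "graph_correspondence VG EG VH EH (incidence VH GV)"
proof
  have G: "VG = (\<Union>h\<in>VH. GV h)" "EG = (\<Union>h\<in>VH. GE h)"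
    and sub: "\<And>h. h \<in> VH \<Longrightarrow> subgraph (GV h) (GE h) VG EG"
    and Hv: "\<And>v. v \<in> VG \<Longrightarrow> conn EH {h \<in> VH. v \<in> GV h}"
    using dec unfolding graph_decomposition_def by blast+
  have Image: "incidence VH GV `` {v} = {h \<in> VH. v \<in> GV h}"
    "(incidence VH GV)\<inverse> `` {h} = (if h \<in> VH then GV h else {})" for v h
    by (auto simp: incidence_def)
  show "incidence VH GV \<subseteq> VG \<times> VH" using G by (auto simp: incidence_def)
  show "finite (incidence VH GV `` {v})" if "v \<in> VG" for v
    using assms(2) that by (simp add: Image point_finite_def)
  show "finite ((incidence VH GV)\<inverse> `` {h})" for h
    using parts by (simp add: Image)
  show "conn EH (incidence VH GV `` {v})" if "v \<in> VG" for v
    using Hv[OF that] by (simp add: Image)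
  show "conn EG ((incidence VH GV)\<inverse> `` {h})" if "h \<in> VH" for h
  proof -
    have "conn (GE h) (GV h)" "GE h \<subseteq> EG" using parts sub[OF that] that by (auto simp: subgraph_def)
    then show ?thesis using that conn_mono_edges by (simp add: Image)
  qed
  show "incidence VH GV `` {v} \<inter> incidence VH GV `` {v'} \<noteq> {}" if e: "{v, v'} \<in> EG" for v v'
  proof -
    obtain h where h: "h \<in> VH" "{v, v'} \<in> GE h" using e G(2) by auto
    then have "{v, v'} \<subseteq> GV h" using sub[OF h(1)] by (auto simp: subgraph_def graph_def)
    then show ?thesis using h by (auto simp: Image)
  qed
  show "(incidence VH GV)\<inverse> `` {h} \<inter> (incidence VH GV)\<inverse> `` {h'} \<noteq> {}"
    if "{h, h'} \<in> EH" for h h'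
  proof -
    have "{h, h'} \<subseteq> VH" using dec that by (auto simp: graph_decomposition_def graph_def)
    then show ?thesis using assms(3) that by (simp add: Image honest_def)
  qed
qed

theorem lemma3p5:
  fixes VG :: "'v set" and EG :: "'v set set"
    and VH :: "'h set" and EH :: "'h set set"
    and GV :: "'h \<Rightarrow> 'v set" and GE :: "'h \<Rightarrow> 'v set set"
  assumes "graph_decomposition VG EG VH EH GV GE"
    and "point_finite VG VH GV"
    and "honest EH GV"
    and "\<forall>h\<in>VH. finite (GV h) \<and> conn (GE h) (GV h)"
  shows "bij_betw (induced_dir VH EH GV) (directions VG EG) (directions VH EH)"
  using graph_correspondence.bij_betw_dir_transfer[OF graph_correspondence_incidence[OF assms]]
  by (simp add: induced_dir_eq_dir_transfer)

end
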